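(* Let $G$ be a graph and let $H = K_1 + G$ be the join of a single new node with $G$. If $H$ is an eulerian graph whose number of edges $q$ satisfies $q \equiv 1$ or $2 \pmod 4$, then $G$ is non-supergraceful.
   Context: Graphs are finite, simple. An eulerian graph is a connected graph all of whose nodes have even degree. For a graph $G$ with $p$ nodes and $q$ edges, a total labeling is a map $\varphi: V(G) \to \{1,\dots,p+q\}$ such that the $p$ node labels and the $q$ edge labels $|\varphi(u)-\varphi(v)|$, $uv \in E(G)$, are all pairwise distinct, so that together they form exactly $\{1,\dots,p+q\}$. $G$ is supergraceful if it admits a total labeling, and non-supergraceful otherwise. *)

theory Defs
  imports Main
begin

definition simple_graph :: "'a set \<Rightarrow> 'a set set \<Rightarrow> bool" where
  "simple_graph V E \<longleftrightarrow> finite V \<and> (\<forall>e\<in>E. \<exists>u v. u \<in> V \<and> v \<in> V \<and> u \<noteq> v \<and> e = {u, v})"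

definition adjacent :: "'a set set \<Rightarrow> 'a \<Rightarrow> 'a \<Rightarrow> bool" where
  "adjacent E u v \<longleftrightarrow> {u, v} \<in> E"

definition connected_graph :: "'a set \<Rightarrow> 'a set set \<Rightarrow> bool" where
  "connected_graph V E \<longleftrightarrow> V \<noteq> {} \<and> (\<forall>u\<in>V. \<forall>v\<in>V. (adjacent E)\<^sup>*\<^sup>* u v)"

definition degree :: "'a set set \<Rightarrow> 'a \<Rightarrow> nat" where
  "degree E v = card {e \<in> E. v \<in> e}"

definition eulerian :: "'a set \<Rightarrow> 'a set set \<Rightarrow> bool" where
  "eulerian V E \<longleftrightarrow> simple_graph V E \<and> connected_graph V E \<and> (\<forall>v\<in>V. even (degree E v))"

text \<open>Join \<open>K_1 + G\<close>: new node \<open>None\<close>, old nodes \<open>Some v\<close>; the new node is adjacent to every old node.\<close>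
definition join_K1_nodes :: "'a set \<Rightarrow> 'a option set" where
  "join_K1_nodes V = insert None (Some ` V)"

definition join_K1_edges :: "'a set \<Rightarrow> 'a set set \<Rightarrow> 'a option set set" where
  "join_K1_edges V E = ((\<lambda>e. Some ` e) ` E) \<union> {{None, Some v} | v. v \<in> V}"

text \<open>Label of the edge \<open>{u,v}\<close> induced by a node labeling: \<open>|\<phi> u - \<phi> v|\<close>
  (for a 2-element edge this is max minus min of the two end labels).\<close>
definition edge_label :: "('a \<Rightarrow> int) \<Rightarrow> 'a set \<Rightarrow> int" where
  "edge_label \<phi> e = Max (\<phi> ` e) - Min (\<phi> ` e)"

definition total_labeling :: "'a set \<Rightarrow> 'a set set \<Rightarrow> ('a \<Rightarrow> int) \<Rightarrow> bool" where
  "total_labeling V E \<phi> \<longleftrightarrow>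
     inj_on \<phi> V \<and> inj_on (edge_label \<phi>) E \<and>
     \<phi> ` V \<inter> edge_label \<phi> ` E = {} \<and>
     \<phi> ` V \<union> edge_label \<phi> ` E = {1 .. int (card V + card E)}"

definition supergraceful :: "'a set \<Rightarrow> 'a set set \<Rightarrow> bool" where
  "supergraceful V E \<longleftrightarrow> (\<exists>\<phi>. total_labeling V E \<phi>)"

lemma edge_label_pair:
  assumes "u \<noteq> v" "inj_on \<phi> {u, v}"
  shows "edge_label \<phi> {u, v} = \<bar>\<phi> u - \<phi> v\<bar>"
  using assms by (auto simp: edge_label_def max_def min_def)

end

theory Submission
  imports Defs
begin

text \<open>In a total labeling the labels are exactly \<open>1, \<dots>, N\<close> with \<open>N = p + q\<close>, so they sum to
  \<open>N(N+1)/2\<close>, which is odd when \<open>N \<equiv> 1, 2 (mod 4)\<close>. On the other hand \<open>|a - b| \<equiv> a + b (mod 2)\<close>,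
  so modulo 2 the edge labels sum to \<open>\<Sum>\<^sub>v deg(v) \<phi>(v)\<close> and all labels to \<open>\<Sum>\<^sub>v (deg(v) + 1) \<phi>(v)\<close>.
  If every node of \<open>G\<close> has odd degree this is even. In \<open>K\<^sub>1 + G\<close> every old node gains one edge,
  so \<open>K\<^sub>1 + G\<close> being eulerian forces all degrees of \<open>G\<close> to be odd, and \<open>K\<^sub>1 + G\<close> has
  exactly \<open>p + q\<close> edges.\<close>

lemma simple_graph_edge_subset:
  assumes "simple_graph V E" "e \<in> E"
  shows "e \<subseteq> V"
  using assms unfolding simple_graph_def by auto

lemma simple_graph_finite_edges:
  assumes "simple_graph V E"
  shows "finite E"
proof -
  have "E \<subseteq> Pow V"
    using simple_graph_edge_subset[OF assms] by blast
  then show ?thesis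
    using assms finite_subset unfolding simple_graph_def by blast
qed

lemma card_join_K1_edges:
  assumes "simple_graph V E"
  shows "card (join_K1_edges V E) = card V + card E"
proof -
  have "finite V" "finite E"
    using assms simple_graph_finite_edges by (auto simp: simple_graph_def)
  moreover have "join_K1_edges V E = (\<lambda>e. Some ` e) ` E \<union> (\<lambda>v. {None, Some v}) ` V"
    unfolding join_K1_edges_def by blast
  moreover have "inj_on (\<lambda>e. Some ` e) E"
    by (simp add: inj_on_def inj_image_eq_iff)
  moreover have "inj_on (\<lambda>v. {None, Some v}) V"
    by (auto simp: inj_on_def doubleton_eq_iff)
  moreover have "(\<lambda>e. Some ` e) ` E \<inter> (\<lambda>v. {None, Some v}) ` V = {}"
    by auto
  ultimately show ?thesis
    by (simp add: card_Un_disjoint card_image)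
qed

lemma degree_join_K1_edges_Some:
  assumes "simple_graph V E" "v \<in> V"
  shows "degree (join_K1_edges V E) (Some v) = degree E v + 1"
proof -
  have "{e \<in> join_K1_edges V E. Some v \<in> e} = insert {None, Some v} ((\<lambda>e. Some ` e) ` {e \<in> E. v \<in> e})"
    using assms(2) by (auto simp: join_K1_edges_def doubleton_eq_iff)
  moreover have "inj_on (\<lambda>e. Some ` e) {e \<in> E. v \<in> e}"
    by (simp add: inj_on_def inj_image_eq_iff)
  moreover have "{None, Some v} \<notin> (\<lambda>e. Some ` e) ` {e \<in> E. v \<in> e}"
    by auto
  ultimately show ?thesis
    using simple_graph_finite_edges[OF assms(1)] by (simp add: degree_def card_image)
qed

lemma sum_edges_eq_sum_degree:
  fixes f :: "'a \<Rightarrow> 'b::comm_semiring_1"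
  assumes "finite V" "finite E" "\<And>e. e \<in> E \<Longrightarrow> e \<subseteq> V"
  shows "(\<Sum>e\<in>E. sum f e) = (\<Sum>v\<in>V. of_nat (degree E v) * f v)"
proof -
  have "sum f e = (\<Sum>v\<in>V. if v \<in> e then f v else 0)" if "e \<in> E" for e
    using sum.inter_restrict[OF assms(1), of f e] assms(3)[OF that] by (simp add: Int_absorb1)
  then have "(\<Sum>e\<in>E. sum f e) = (\<Sum>e\<in>E. \<Sum>v\<in>V. if v \<in> e then f v else 0)"
    by (rule sum.cong[OF refl])
  also have "\<dots> = (\<Sum>v\<in>V. \<Sum>e\<in>E. if v \<in> e then f v else 0)"
    by (rule sum.swap)
  also have "\<dots> = (\<Sum>v\<in>V. of_nat (degree E v) * f v)"
    by (simp add: sum.inter_filter[OF assms(2), symmetric] degree_def)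
  finally show ?thesis .
qed

lemma even_edge_label_add_sum:
  assumes "simple_graph V E" "e \<in> E" "inj_on \<phi> V"
  shows "even (edge_label \<phi> e + sum \<phi> e)"
proof -
  obtain u v where uv: "u \<in> V" "v \<in> V" "u \<noteq> v" "e = {u, v}"
    using assms(1,2) unfolding simple_graph_def by blast
  then have "inj_on \<phi> {u, v}"
    using assms(3) inj_on_subset by blast
  then have "edge_label \<phi> e + sum \<phi> e = 2 * max (\<phi> u) (\<phi> v)"
    using uv edge_label_pair by fastforce
  then show ?thesis
    by simp
qed

lemma sum_total_labeling:
  assumes "total_labeling V E \<phi>" "finite V" "finite E"
  shows "sum \<phi> V + sum (edge_label \<phi>) E = \<Sum>{1 .. int (card V + card E)}"
proof -
  have "\<Sum>{1 .. int (card V + card E)} = \<Sum>(\<phi> ` V \<union> edge_label \<phi> ` E)"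
    using assms(1) by (simp add: total_labeling_def)
  also have "\<dots> = \<Sum>(\<phi> ` V) + \<Sum>(edge_label \<phi> ` E)"
    using assms by (intro sum.union_disjoint) (auto simp: total_labeling_def)
  also have "\<dots> = sum \<phi> V + sum (edge_label \<phi>) E"
    using assms(1) by (simp add: total_labeling_def sum.reindex)
  finally show ?thesis
    by simp
qed

lemma even_sum_total_labeling_if_odd_degrees:
  assumes "simple_graph V E" "total_labeling V E \<phi>" "\<And>v. v \<in> V \<Longrightarrow> odd (degree E v)"
  shows "even (sum \<phi> V + sum (edge_label \<phi>) E)"
proof -
  define D where "D = (\<Sum>e\<in>E. sum \<phi> e)"
  have "finite V" "finite E"
    using assms(1) simple_graph_finite_edges by (auto simp: simple_graph_def)
  have "even (sum (edge_label \<phi>) E + D)"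
    using even_edge_label_add_sum[OF assms(1) _, of _ \<phi>] assms(2)
    unfolding D_def sum.distrib[symmetric] by (auto simp: total_labeling_def intro: dvd_sum)
  moreover have "sum \<phi> V + D = (\<Sum>v\<in>V. (1 + int (degree E v)) * \<phi> v)"
    using sum_edges_eq_sum_degree[OF \<open>finite V\<close> \<open>finite E\<close> simple_graph_edge_subset[OF assms(1)]]
    by (simp add: D_def sum.distrib algebra_simps)
  moreover have "even \<dots>"
    using assms(3) by (intro dvd_sum) simp
  ultimately show ?thesis
    by (metis dvd_add_right_iff add.commute add.left_commute even_add)
qed

lemma odd_sum_Icc_1:
  assumes "n mod 4 = 1 \<or> n mod 4 = 2"
  shows "odd (\<Sum>{1 .. int n})"
proof -
  obtain k where "n = 4 * k + 1 \<or> n = 4 * k + 2"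
    using assms by (metis div_mult_mod_eq mult.commute)
  then have "\<Sum>{1 .. int n} = (4 * int k + 1) * (2 * int k + 1) \<or>
      \<Sum>{1 .. int n} = (2 * int k + 1) * (4 * int k + 3)"
    using Sum_Icc_int[of 1 "int n"] by (auto simp: algebra_simps)
  then show ?thesis
    by auto
qed

theorem not_supergraceful_if_odd_degrees:
  assumes "simple_graph V E" "\<And>v. v \<in> V \<Longrightarrow> odd (degree E v)"
    and "(card V + card E) mod 4 = 1 \<or> (card V + card E) mod 4 = 2"
  shows "\<not> supergraceful V E"
proof
  assume "supergraceful V E"
  then obtain \<phi> where \<phi>: "total_labeling V E \<phi>"
    by (auto simp: supergraceful_def)
  have "finite V" "finite E"
    using assms(1) simple_graph_finite_edges by (auto simp: simple_graph_def)
  have "even (\<Sum>{1 .. int (card V + card E)})"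
    using even_sum_total_labeling_if_odd_degrees[OF assms(1) \<phi> assms(2)]
      sum_total_labeling[OF \<phi> \<open>finite V\<close> \<open>finite E\<close>] by simp
  moreover have "odd (\<Sum>{1 .. int (card V + card E)})"
    using assms(3) by (rule odd_sum_Icc_1)
  ultimately show False
    by contradiction
qed

theorem corollary7p4:
  fixes V :: "'a set" and E :: "'a set set"
  assumes "simple_graph V E"
    and "eulerian (join_K1_nodes V) (join_K1_edges V E)"
    and "card (join_K1_edges V E) mod 4 = 1 \<or> card (join_K1_edges V E) mod 4 = 2"
  shows "\<not> supergraceful V E"
proof (rule not_supergraceful_if_odd_degrees[OF assms(1)])
  fix v
  assume "v \<in> V"
  then have "even (degree (join_K1_edges V E) (Some v))"
    using assms(2) by (simp add: eulerian_def join_K1_nodes_def)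
  then show "odd (degree E v)"
    using degree_join_K1_edges_Some[OF assms(1) \<open>v \<in> V\<close>] by simp
next
  show "(card V + card E) mod 4 = 1 \<or> (card V + card E) mod 4 = 2"
    using assms(3) card_join_K1_edges[OF assms(1)] by simp
qed

end
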